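(* Let $A\in\mathcal A_n$. Then $\tau(A)$ is naturally labeled.
   Context: $\mathcal A_n$ is the set of ordered products $A=A_1\times\cdots\times A_k$ of connected linear Nakayama algebras (over an algebraically closed field) with $n$ simple modules in total; its Kupisch series $[c_0,\dots,c_{n-1}]$ is the concatenation of those of the factors, where a connected linear Nakayama algebra with $m$ simple modules has Kupisch series $[c_0,\dots,c_{m-1}]$, $c_i=\dim e_iA$, characterized by $c_{i+1}+1\ge c_i\ge2$ for $0\le i<m-1$ and $c_{m-1}=1$. $\tau(A)$ is the tree on $\{0,\dots,n\}$, rooted at $n$, in which the parent of $i$ is $i+c_i$ for $0\le i<n$. A rooted tree with vertex set $\{0,\dots,n\}$ is naturally labeled if labels increase towards the root and, for each $i$, all children of $i$ have labels smaller than all children of $i+1$. *)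

theory Defs
  imports Main
begin

text \<open>Kupisch series of a connected linear Nakayama algebra with m simple modules:
  a list [c_0,...,c_{m-1}] with m \<ge> 1, c_{m-1} = 1 and c_{i+1}+1 \<ge> c_i \<ge> 2 for i < m-1.\<close>
definition connected_linear_kupisch :: "nat list \<Rightarrow> bool" where
  "connected_linear_kupisch c \<longleftrightarrow>
     c \<noteq> [] \<and> c ! (length c - 1) = 1 \<and>
     (\<forall>i. i + 1 < length c \<longrightarrow> c ! (Suc i) + 1 \<ge> c ! i \<and> c ! i \<ge> 2)"

definition kupisch_of_product :: "nat list list \<Rightarrow> nat list" where
  "kupisch_of_product ks = concat ks"

text \<open>The class A_n, represented by Kupisch series (which determine the algebras up to isomorphism).\<close>
definition A_class :: "nat \<Rightarrow> nat list set" where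
  "A_class n = {kupisch_of_product ks | ks.
      (\<forall>k\<in>set ks. connected_linear_kupisch k) \<and> length (kupisch_of_product ks) = n}"

text \<open>The tree tau(A) on {0..n}, rooted at n, given by its parent function: parent(i) = i + c_i.\<close>
definition tau_parent :: "nat list \<Rightarrow> nat \<Rightarrow> nat" where
  "tau_parent c i = i + c ! i"

text \<open>A rooted tree on {0..n} with root n, given by a parent map p on {0..<n}, is naturally labeled
  if labels increase towards the root and all children of i are smaller than all children of i+1.
  The condition  i < p i \<le> n  for all i < n also guarantees p defines a tree rooted at n.\<close>
definition naturally_labeled :: "nat \<Rightarrow> (nat \<Rightarrow> nat) \<Rightarrow> bool" where
  "naturally_labeled n p \<longleftrightarrow>
     (\<forall>i<n. i < p i \<and> p i \<le> n) \<and>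
     (\<forall>i<n. \<forall>a<n. \<forall>b<n. p a = i \<and> p b = Suc i \<longrightarrow> a < b)"

end

theory Submission
  imports Defs
begin

text \<open>Every connected block of a Kupisch series ends in 1, so the local conditions
  c_i \<ge> 1, c_i \<le> c_{i+1} + 1 and "the last entry is 1" survive concatenation. For the parent map
  p(i) = i + c_i they say that p(i) > i, that p is weakly increasing and that p(n-1) = n.
  Weak monotonicity alone already forces every child of i below every child of i + 1.\<close>

definition linear_kupisch :: "nat list \<Rightarrow> bool" where
  "linear_kupisch c \<longleftrightarrow>
     (\<forall>i<length c. 1 \<le> c ! i) \<and>
     (\<forall>i. Suc i < length c \<longrightarrow> c ! i \<le> c ! Suc i + 1) \<and>
     (c \<noteq> [] \<longrightarrow> last c = 1)"

lemma linear_kupisch_Nil: "linear_kupisch []"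
  by (simp add: linear_kupisch_def)

lemma connected_linear_kupisch_imp_linear_kupisch:
  assumes "connected_linear_kupisch c"
  shows "linear_kupisch c"
proof -
  have last: "c \<noteq> []" "last c = 1"
    using assms by (simp_all add: connected_linear_kupisch_def last_conv_nth)
  have step: "2 \<le> c ! i \<and> c ! i \<le> c ! Suc i + 1" if "Suc i < length c" for i
    using assms that by (auto simp: connected_linear_kupisch_def)
  have "1 \<le> c ! i" if "i < length c" for i
  proof (cases "Suc i < length c")
    case True
    then show ?thesis using step by fastforce
  next
    case False
    then have "i = length c - 1" using that by simp
    then show ?thesis using last by (simp add: last_conv_nth)
  qed
  then show ?thesis
    using step last by (simp add: linear_kupisch_def)
qed

lemma linear_kupisch_append:
  assumes a: "linear_kupisch a" and b: "linear_kupisch b"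
  shows "linear_kupisch (a @ b)"
proof -
  have step: "(a @ b) ! i \<le> (a @ b) ! Suc i + 1" if i: "Suc i < length (a @ b)" for i
  proof -
    consider "Suc i < length a" | "Suc i = length a" | "length a \<le> i" by linarith
    then show ?thesis
    proof cases
      case 1
      then show ?thesis using a by (simp add: linear_kupisch_def nth_append)
    next
      case 2
      then have "a \<noteq> []" "i = length a - 1" by auto
      then have "a ! i = 1"
        using a by (simp add: linear_kupisch_def last_conv_nth)
      with 2 show ?thesis by (simp add: nth_append)
    next
      case 3
      then show ?thesis
        using b i by (simp add: linear_kupisch_def nth_append Suc_diff_le)
    qed
  qed
  moreover have "1 \<le> (a @ b) ! i" if "i < length (a @ b)" for i
    using a b that by (auto simp: linear_kupisch_def nth_append)
  moreover have "last (a @ b) = 1" if "a @ b \<noteq> []"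
    using a b that by (cases "b = []") (auto simp: linear_kupisch_def)
  ultimately show ?thesis
    by (simp add: linear_kupisch_def)
qed

lemma linear_kupisch_concat:
  assumes "\<forall>k\<in>set ks. linear_kupisch k"
  shows "linear_kupisch (concat ks)"
  using assms by (induction ks) (simp_all add: linear_kupisch_Nil linear_kupisch_append)

lemma linear_kupisch_tau_parent_mono:
  assumes "linear_kupisch c" "i \<le> j" "j < length c"
  shows "tau_parent c i \<le> tau_parent c j"
proof -
  have "tau_parent c k \<le> tau_parent c (Suc k)" if "Suc k < length c" for k
    using assms(1) that by (simp add: linear_kupisch_def tau_parent_def)
  then show ?thesis
    using lift_Suc_mono_le_ivl[of "{k. Suc k < length c}" "tau_parent c" i j] assms(2,3)
    by (auto simp: subset_iff)
qed

lemma linear_kupisch_tau_parent_gt: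
  assumes "linear_kupisch c" "i < length c"
  shows "i < tau_parent c i"
  using assms by (auto simp: linear_kupisch_def tau_parent_def)

lemma linear_kupisch_tau_parent_le_length:
  assumes c: "linear_kupisch c" and i: "i < length c"
  shows "tau_parent c i \<le> length c"
proof -
  have "tau_parent c i \<le> tau_parent c (length c - 1)"
    using linear_kupisch_tau_parent_mono[OF c] i by simp
  also have "\<dots> = length c"
    using c i by (auto simp: linear_kupisch_def tau_parent_def last_conv_nth)
  finally show ?thesis .
qed

lemma naturally_labeled_if_mono:
  assumes "\<And>i. i < n \<Longrightarrow> i < p i" and "\<And>i. i < n \<Longrightarrow> p i \<le> n"
    and mono: "\<And>a b. a \<le> b \<Longrightarrow> b < n \<Longrightarrow> p a \<le> p b"
  shows "naturally_labeled n p"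
  unfolding naturally_labeled_def
proof (intro conjI allI impI)
  fix i a b
  assume "a < n" "b < n" "p a = i \<and> p b = Suc i"
  then show "a < b"
    using mono[of b a] by (metis Suc_n_not_le_n not_less)
qed (use assms in auto)

theorem lemma3p5:
  fixes n :: nat and c :: "nat list"
  assumes "c \<in> A_class n"
  shows "naturally_labeled n (tau_parent c)"
proof -
  obtain ks where c: "c = concat ks" "length c = n"
    and blocks: "\<forall>k\<in>set ks. connected_linear_kupisch k"
    using assms by (auto simp: A_class_def kupisch_of_product_def)
  have "linear_kupisch c"
    using c(1) blocks connected_linear_kupisch_imp_linear_kupisch linear_kupisch_concat
    by blast
  then show ?thesis
    using c(2) by (intro naturally_labeled_if_mono) (auto intro: linear_kupisch_tau_parent_gt
        linear_kupisch_tau_parent_le_length linear_kupisch_tau_parent_mono)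
qed

end
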